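(* Let $Q$ be an acyclic quiver equipped with a group $G$ of admissible automorphisms. Then for every object $M$ of the cluster category $\mathcal C_Q$ and every $g\in G$, $X_{gM}=g\,X_M$.
   Context: $k=\mathbb C$; $Q$ a finite quiver without oriented cycles with vertex set $Q_0$; $G$ acts on $Q$ by quiver automorphisms (permutations of vertices and arrows compatible with sources and targets), admissibly: for distinct $i,j$ in the same $G$-orbit there is no path of length $1$ or $2$ from $i$ to $j$. $G$ acts on representations by $(gV)(i)=V(g^{-1}i)$, $(gV)(\alpha)=V(g^{-1}\alpha)$ and on morphisms by $(gf)_i=f_{g^{-1}i}$; these auto-equivalences of $kQ$-mod induce auto-equivalences of $D^b(kQ\text{-mod})$ commuting with $[1]$ and $\tau$, hence of $\mathcal C_Q$, with $gP_i[1]\cong P_{gi}[1]$. $\mathcal C_Q$ is the orbit category of $D^b(kQ\text{-mod})$ under $\tau^{-1}[1]$; its indecomposables are the indecomposable $kQ$-modules and the $P_i[1]$ ($P_i$ the indecomposable projective at $i$). The Caldero–Chapoton map $X_?:\mathrm{Ob}(\mathcal C_Q)\to\mathbb Z[u_i^{\pm1}:i\in Q_0]$ is given by $X_{M\oplus N}=X_MX_N$, $X_{P_i[1]}=u_i$, and for a $kQ$-module $M$, $X_M=\sum_{\mathbf e}\chi(\mathrm{Gr}_{\mathbf e}(M))\prod_{i}u_i^{-\langle\mathbf e,\alpha_i\rangle-\langle\alpha_i,\mathbf{dim}M-\mathbf e\rangle}$, where $\mathrm{Gr}_{\mathbf e}(M)$ is the variety of submodules with dimension vector $\mathbf e$,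 $\chi$ Euler characteristic, $\langle\cdot,\cdot\rangle$ the Euler form and $\alpha_i$ the $i$-th standard basis vector. $G$ acts on $\mathbb Z[u_i^{\pm1}]$ by ring automorphisms $gu_i=u_{gi}$. *)

theory Defs
  imports "HOL-Homology.Homology" "HOL-Library.Poly_Mapping" "HOL-Library.Function_Algebras"
begin

definition quiver_path :: "('e \<Rightarrow> 'v) \<Rightarrow> ('e \<Rightarrow> 'v) \<Rightarrow> 'v \<Rightarrow> 'v \<Rightarrow> 'e list \<Rightarrow> bool" where
  "quiver_path src tgt i j p \<longleftrightarrow> p \<noteq> [] \<and> src (hd p) = i \<and> tgt (last p) = j \<and>
     (\<forall>k. Suc k < length p \<longrightarrow> tgt (p ! k) = src (p ! Suc k))"

definition acyclic_quiver :: "('e \<Rightarrow> 'v) \<Rightarrow> ('e \<Rightarrow> 'v) \<Rightarrow> bool" where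
  "acyclic_quiver src tgt \<longleftrightarrow> (\<nexists>i p. quiver_path src tgt i i p)"

definition quiver_group_action ::
  "('g, 'b) monoid_scheme \<Rightarrow> ('g \<Rightarrow> 'v \<Rightarrow> 'v) \<Rightarrow> ('g \<Rightarrow> 'e \<Rightarrow> 'e) \<Rightarrow> ('e \<Rightarrow> 'v) \<Rightarrow> ('e \<Rightarrow> 'v) \<Rightarrow> bool" where
  "quiver_group_action G vact aact src tgt \<longleftrightarrow> group G \<and>
     (\<forall>g\<in>carrier G. bij (vact g) \<and> bij (aact g) \<and>
        (\<forall>\<alpha>. src (aact g \<alpha>) = vact g (src \<alpha>) \<and> tgt (aact g \<alpha>) = vact g (tgt \<alpha>))) \<and>
     vact \<one>\<^bsub>G\<^esub> = id \<and> aact \<one>\<^bsub>G\<^esub> = id \<and>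
     (\<forall>g\<in>carrier G. \<forall>h\<in>carrier G. vact (g \<otimes>\<^bsub>G\<^esub> h) = vact g \<circ> vact h \<and>
                                      aact (g \<otimes>\<^bsub>G\<^esub> h) = aact g \<circ> aact h)"

definition admissible_action ::
  "('g, 'b) monoid_scheme \<Rightarrow> ('g \<Rightarrow> 'v \<Rightarrow> 'v) \<Rightarrow> ('g \<Rightarrow> 'e \<Rightarrow> 'e) \<Rightarrow> ('e \<Rightarrow> 'v) \<Rightarrow> ('e \<Rightarrow> 'v) \<Rightarrow> bool" where
  "admissible_action G vact aact src tgt \<longleftrightarrow> quiver_group_action G vact aact src tgt \<and>
     (\<forall>g\<in>carrier G. \<forall>i p. vact g i \<noteq> i \<longrightarrow> quiver_path src tgt i (vact g i) p \<longrightarrow> length p \<notin> {1, 2})"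

text \<open>A finite-dimensional representation: a dimension vector d and, for each arrow a,
  a d(tgt a) x d(src a) complex matrix (entries outside that range are ignored).\<close>
type_synonym ('v, 'e) qrep = "('v \<Rightarrow> nat) \<times> ('e \<Rightarrow> nat \<Rightarrow> nat \<Rightarrow> complex)"

text \<open>Objects of the cluster category: M \<oplus> (\<Oplus>_i P_i[1]^{m i}), with M a kQ-module.\<close>
type_synonym ('v, 'e) cc_obj = "('v, 'e) qrep \<times> ('v \<Rightarrow> nat)"

definition rep_act :: "('g, 'b) monoid_scheme \<Rightarrow> ('g \<Rightarrow> 'v \<Rightarrow> 'v) \<Rightarrow> ('g \<Rightarrow> 'e \<Rightarrow> 'e) \<Rightarrow> 'g
    \<Rightarrow> ('v, 'e) qrep \<Rightarrow> ('v, 'e) qrep" where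
  "rep_act G vact aact g V = (fst V \<circ> vact (inv\<^bsub>G\<^esub> g), snd V \<circ> aact (inv\<^bsub>G\<^esub> g))"

definition obj_act :: "('g, 'b) monoid_scheme \<Rightarrow> ('g \<Rightarrow> 'v \<Rightarrow> 'v) \<Rightarrow> ('g \<Rightarrow> 'e \<Rightarrow> 'e) \<Rightarrow> 'g
    \<Rightarrow> ('v, 'e) cc_obj \<Rightarrow> ('v, 'e) cc_obj" where
  "obj_act G vact aact g X = (rep_act G vact aact g (fst X), snd X \<circ> vact (inv\<^bsub>G\<^esub> g))"

text \<open>A subspace U of C^n is encoded by its orthogonal projection matrix P (Hermitian, idempotent,
  trace = dim U). Gr_e(M) is the set of tuples (P_i) of such projections, with dim U_i = e_i,
  such that A_a U_{src a} \<subseteq> U_{tgt a}, i.e. P_{tgt a} A_a P_{src a} = A_a P_{src a};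
  it carries the Euclidean topology on the matrix entries.\<close>
definition is_proj :: "nat \<Rightarrow> nat \<Rightarrow> (nat \<Rightarrow> nat \<Rightarrow> complex) \<Rightarrow> bool" where
  "is_proj n k P \<longleftrightarrow> (\<forall>r c. (r \<ge> n \<or> c \<ge> n) \<longrightarrow> P r c = 0) \<and>
     (\<forall>r c. P r c = cnj (P c r)) \<and>
     (\<forall>r<n. \<forall>c<n. (\<Sum>l<n. P r l * P l c) = P r c) \<and>
     (\<Sum>l<n. P l l) = of_nat k"

definition grass_set :: "('e \<Rightarrow> 'v) \<Rightarrow> ('e \<Rightarrow> 'v) \<Rightarrow> ('v, 'e) qrep \<Rightarrow> ('v \<Rightarrow> nat)
    \<Rightarrow> ('v \<Rightarrow> nat \<Rightarrow> nat \<Rightarrow> complex) set" where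
  "grass_set src tgt M e = {P. (\<forall>i. is_proj (fst M i) (e i) (P i)) \<and>
     (\<forall>a. let ds = fst M (src a); dt = fst M (tgt a); A = snd M a;
              AP = (\<lambda>r c. \<Sum>l<ds. A r l * P (src a) l c) in
          \<forall>r<dt. \<forall>c<ds. (\<Sum>k<dt. P (tgt a) r k * AP k c) = AP r c)}"

definition matrix_tuple_topology :: "('v \<Rightarrow> nat \<Rightarrow> nat \<Rightarrow> complex) topology" where
  "matrix_tuple_topology =
     product_topology (\<lambda>i. product_topology (\<lambda>r. product_topology (\<lambda>c. euclidean) UNIV) UNIV) UNIV"

definition quiver_grassmannian :: "('e \<Rightarrow> 'v) \<Rightarrow> ('e \<Rightarrow> 'v) \<Rightarrow> ('v, 'e) qrep \<Rightarrow> ('v \<Rightarrow> nat)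
    \<Rightarrow> ('v \<Rightarrow> nat \<Rightarrow> nat \<Rightarrow> complex) topology" where
  "quiver_grassmannian src tgt M e = subtopology matrix_tuple_topology (grass_set src tgt M e)"

definition Z_independent :: "('a, 'b) monoid_scheme \<Rightarrow> 'a set \<Rightarrow> bool" where
  "Z_independent H S \<longleftrightarrow> finite S \<and> S \<subseteq> carrier H \<and>
     (\<forall>c :: 'a \<Rightarrow> int. finprod H (\<lambda>x. x [^]\<^bsub>H\<^esub> c x) S = \<one>\<^bsub>H\<^esub> \<longrightarrow> (\<forall>x\<in>S. c x = 0))"

definition group_rank :: "('a, 'b) monoid_scheme \<Rightarrow> nat" where
  "group_rank H = Sup {card S | S. Z_independent H S}"

definition betti :: "int \<Rightarrow> 'a topology \<Rightarrow> nat" where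
  "betti p X = group_rank (homology_group p X)"

definition euler_char :: "'a topology \<Rightarrow> int" where
  "euler_char X = (\<Sum>p\<in>{p. betti p X \<noteq> 0}. (-1) ^ nat \<bar>p\<bar> * int (betti p X))"

text \<open>Laurent polynomials in u_i (i :: 'v) are finitely supported maps from exponent
  vectors ('v \<Rightarrow> int) to coefficients; multiplication is the Poly_Mapping convolution.\<close>
type_synonym 'v laurent = "('v \<Rightarrow> int) \<Rightarrow>\<^sub>0 int"

definition lmonom :: "('v \<Rightarrow> int) \<Rightarrow> 'v laurent" where
  "lmonom a = Poly_Mapping.single a 1"

text \<open>Ring automorphism with u_i \<mapsto> u_{\<sigma> i}: u^a \<mapsto> u^(a \<circ> inv \<sigma>).\<close>
definition lact :: "('v \<Rightarrow> 'v) \<Rightarrow> 'v laurent \<Rightarrow> 'v laurent" where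
  "lact \<sigma> f = (\<Sum>a\<in>Poly_Mapping.keys f. Poly_Mapping.single (a \<circ> Hilbert_Choice.inv \<sigma>) (Poly_Mapping.lookup f a))"

definition euler_form :: "('e::finite \<Rightarrow> 'v) \<Rightarrow> ('e \<Rightarrow> 'v) \<Rightarrow> ('v::finite \<Rightarrow> int) \<Rightarrow> ('v \<Rightarrow> int) \<Rightarrow> int" where
  "euler_form src tgt a b = (\<Sum>i\<in>UNIV. a i * b i) - (\<Sum>\<alpha>\<in>UNIV. a (src \<alpha>) * b (tgt \<alpha>))"

definition unitvec :: "'v \<Rightarrow> 'v \<Rightarrow> int" where
  "unitvec i = (\<lambda>j. if j = i then 1 else 0)"

definition CC_module :: "('e::finite \<Rightarrow> 'v::finite) \<Rightarrow> ('e \<Rightarrow> 'v) \<Rightarrow> ('v, 'e) qrep \<Rightarrow> 'v laurent" where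
  "CC_module src tgt M = (\<Sum>e\<in>{e. \<forall>i. e i \<le> fst M i}.
     Poly_Mapping.single
       (\<lambda>i. - euler_form src tgt (int \<circ> e) (unitvec i)
            - euler_form src tgt (unitvec i) (\<lambda>j. int (fst M j) - int (e j)))
       (euler_char (quiver_grassmannian src tgt M e)))"

definition CC :: "('e::finite \<Rightarrow> 'v::finite) \<Rightarrow> ('e \<Rightarrow> 'v) \<Rightarrow> ('v, 'e) cc_obj \<Rightarrow> 'v laurent" where
  "CC src tgt X = CC_module src tgt (fst X) * lmonom (int \<circ> snd X)"

end

theory Submission
  imports Defs
begin

(* Every ingredient of the Caldero-Chapoton formula is transported along a quiver automorphism
   (p, q) by relabelling.  Pulling a representation M back to M' = (dim M o p, M o q), the map
   P |-> P o p is a homeomorphism from Gr_e(M) onto Gr_{e o p}(M'), so the two Grassmannians have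
   isomorphic singular homology groups and hence the same Euler characteristic; the Euler form is
   invariant under (p, q), so the exponent of the summand for e is relabelled by p.  Reindexing the
   sum over dimension vectors gives X_{M'} = p^{-1} X_M, and X_{P_i[1]} = u_i is relabelled in the same way.
   Since gM is the pullback along (g^{-1}, g^{-1}), this is X_{gM} = g X_M.  Neither acyclicity nor
   admissibility enters: equivariance holds for every group of quiver automorphisms. *)

lemma hom_finprod_comm_group:
  assumes "comm_group H" "comm_group K" "h \<in> hom H K"
    and "finite S" "f \<in> S \<rightarrow> carrier H"
  shows "h (finprod H f S) = finprod K (h \<circ> f) S"
proof -
  interpret H: comm_group H by fact
  interpret K: comm_group K by fact
  interpret group_hom H K h by unfold_locales (fact \<open>h \<in> hom H K\<close>)
  show ?thesis
    using \<open>finite S\<close> \<open>f \<in> S \<rightarrow> carrier H\<close>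
  proof (induction S rule: finite_induct)
    case empty
    then show ?case by simp
  next
    case (insert a F)
    then have "f a \<in> carrier H" "f \<in> F \<rightarrow> carrier H" "(\<lambda>x. h (f x)) \<in> F \<rightarrow> carrier K"
      by (auto simp: Pi_iff)
    with insert show ?case
      by (simp add: H.finprod_insert K.finprod_insert)
  qed
qed

lemma Z_independent_iso_image:
  assumes "comm_group H" "comm_group K" "h \<in> iso H K" "Z_independent H S"
  shows "Z_independent K (h ` S)"
proof -
  interpret H: comm_group H by fact
  interpret K: comm_group K by fact
  interpret h: group_hom H K h using \<open>h \<in> iso H K\<close> by unfold_locales (simp add: iso_def)
  have inj: "inj_on h (carrier H)"
    using \<open>h \<in> iso H K\<close> by (simp add: iso_def bij_betw_def)
  have S: "finite S" "S \<subseteq> carrier H"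
    and indep: "\<And>c :: _ \<Rightarrow> int.
      finprod H (\<lambda>x. x [^]\<^bsub>H\<^esub> c x) S = \<one>\<^bsub>H\<^esub> \<Longrightarrow> \<forall>x\<in>S. c x = 0"
    using \<open>Z_independent H S\<close> unfolding Z_independent_def by blast+
  show ?thesis
    unfolding Z_independent_def
  proof (intro conjI allI impI ballI)
    show "finite (h ` S)" "h ` S \<subseteq> carrier K"
      using S by auto
    fix c :: "_ \<Rightarrow> int" and y
    assume rel: "finprod K (\<lambda>x. x [^]\<^bsub>K\<^esub> c x) (h ` S) = \<one>\<^bsub>K\<^esub>" and "y \<in> h ` S"
    have "finprod K (\<lambda>x. x [^]\<^bsub>K\<^esub> c x) (h ` S) = finprod K (\<lambda>x. h x [^]\<^bsub>K\<^esub> c (h x)) S"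
      using S inj by (intro K.finprod_reindex) (auto intro: inj_on_subset)
    also have "\<dots> = finprod K (h \<circ> (\<lambda>x. x [^]\<^bsub>H\<^esub> c (h x))) S"
      using S by (intro K.finprod_cong') (auto simp: h.hom_int_pow)
    also have "\<dots> = h (finprod H (\<lambda>x. x [^]\<^bsub>H\<^esub> c (h x)) S)"
      using S by (intro hom_finprod_comm_group[symmetric]) (auto intro: assms)
    finally have "h (finprod H (\<lambda>x. x [^]\<^bsub>H\<^esub> c (h x)) S) = h \<one>\<^bsub>H\<^esub>"
      using rel by simp
    then have "finprod H (\<lambda>x. x [^]\<^bsub>H\<^esub> c (h x)) S = \<one>\<^bsub>H\<^esub>"
      using S by (intro inj_onD[OF inj]) (auto intro: H.finprod_closed)
    with indep[of "\<lambda>x. c (h x)"] \<open>y \<in> h ` S\<close> show "c y = 0" by auto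
  qed
qed

lemma Z_independent_card_subset_iso:
  assumes "comm_group H" "comm_group K" "H \<cong> K"
  shows "{card S | S. Z_independent H S} \<subseteq> {card S | S. Z_independent K S}"
proof clarify
  fix S assume "Z_independent H S"
  obtain h where h: "h \<in> iso H K" using \<open>H \<cong> K\<close> by (auto simp: is_iso_def)
  have "inj_on h S"
    using h \<open>Z_independent H S\<close>
    by (auto simp: iso_def bij_betw_def Z_independent_def intro: inj_on_subset)
  then have "card (h ` S) = card S" by (rule card_image)
  with Z_independent_iso_image[OF assms(1,2) h \<open>Z_independent H S\<close>]
  show "\<exists>S'. card S = card S' \<and> Z_independent K S'" by metis
qed

lemma group_rank_iso:
  assumes "comm_group H" "comm_group K" "H \<cong> K"
  shows "group_rank H = group_rank K"
proof -
  have "K \<cong> H" using assms by (simp add: comm_group_def group.iso_sym)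
  then show ?thesis
    unfolding group_rank_def
    using Z_independent_card_subset_iso[OF assms]
      Z_independent_card_subset_iso[OF assms(2,1) \<open>K \<cong> H\<close>]
    by (simp add: subset_antisym)
qed

lemma euler_char_homeomorphic:
  assumes "X homeomorphic_space Y"
  shows "euler_char X = euler_char Y"
proof -
  have "betti p X = betti p Y" for p
    unfolding betti_def
    by (intro group_rank_iso abelian_homology_group
        homeomorphic_space_imp_isomorphic_homology_groups assms)
  then show ?thesis unfolding euler_char_def by simp
qed

lemma lookup_lact:
  assumes "bij \<sigma>"
  shows "Poly_Mapping.lookup (lact \<sigma> f) b = Poly_Mapping.lookup f (b \<circ> \<sigma>)"
proof -
  have "a \<circ> Hilbert_Choice.inv \<sigma> = b \<longleftrightarrow> a = b \<circ> \<sigma>" for a :: "_ \<Rightarrow> int"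
  proof
    assume "a \<circ> Hilbert_Choice.inv \<sigma> = b"
    then show "a = b \<circ> \<sigma>" using assms by (auto simp: bij_is_inj)
  next
    assume "a = b \<circ> \<sigma>"
    then show "a \<circ> Hilbert_Choice.inv \<sigma> = b"
      using assms by (simp add: fun_eq_iff bij_is_surj surj_f_inv_f)
  qed
  then have "Poly_Mapping.lookup (lact \<sigma> f) b =
      (\<Sum>a\<in>Poly_Mapping.keys f. Poly_Mapping.lookup f a when a = b \<circ> \<sigma>)"
    unfolding lact_def lookup_sum lookup_single by simp
  also have "\<dots> = Poly_Mapping.lookup f (b \<circ> \<sigma>)"
    by (cases "b \<circ> \<sigma> \<in> Poly_Mapping.keys f") (simp_all add: when_def in_keys_iff)
  finally show ?thesis .
qed

lemma lact_zero: "bij \<sigma> \<Longrightarrow> lact \<sigma> 0 = 0"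
  by (rule poly_mapping_eqI) (simp add: lookup_lact)

lemma lact_add: "bij \<sigma> \<Longrightarrow> lact \<sigma> (f + g) = lact \<sigma> f + lact \<sigma> g"
  by (rule poly_mapping_eqI) (simp add: lookup_lact lookup_add)

lemma lact_diff: "bij \<sigma> \<Longrightarrow> lact \<sigma> (f - g) = lact \<sigma> f - lact \<sigma> g"
  by (rule poly_mapping_eqI) (simp add: lookup_lact lookup_minus)

lemma lact_sum: "bij \<sigma> \<Longrightarrow> lact \<sigma> (\<Sum>x\<in>A. F x) = (\<Sum>x\<in>A. lact \<sigma> (F x))"
  by (induction A rule: infinite_finite_induct) (simp_all add: lact_add lact_zero)

lemma lact_single:
  "lact \<sigma> (Poly_Mapping.single a c) = Poly_Mapping.single (a \<circ> Hilbert_Choice.inv \<sigma>) c"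
  by (cases "c = 0") (simp_all add: lact_def)

lemma lact_mult:
  assumes "bij \<sigma>"
  shows "lact \<sigma> (f * g) = lact \<sigma> f * lact \<sigma> g"
proof -
  \<comment> \<open>Laurent polynomials are \<int>-combinations of monomials, and on monomials the claim is
    additivity of the relabelling of exponents.\<close>
  have monomial: "lact \<sigma> (frag_of a * g) = lact \<sigma> (frag_of a) * lact \<sigma> g" for a g
  proof (induction g rule: frag_induction[OF subset_UNIV])
    case (2 b)
    have "(a + b) \<circ> Hilbert_Choice.inv \<sigma> =
        (a \<circ> Hilbert_Choice.inv \<sigma>) + (b \<circ> Hilbert_Choice.inv \<sigma>)"
      by (simp add: fun_eq_iff)
    then show ?case by (simp add: mult_single lact_single)
  next
    case (3 g g')
    then show ?case by (simp add: right_diff_distrib lact_diff assms)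
  qed (simp add: lact_zero assms)
  show ?thesis
  proof (induction f rule: frag_induction[OF subset_UNIV])
    case (3 f f')
    then show ?case by (simp add: left_diff_distrib lact_diff assms)
  qed (simp_all add: lact_zero assms monomial)
qed

definition quiver_automorphism ::
    "('e \<Rightarrow> 'v) \<Rightarrow> ('e \<Rightarrow> 'v) \<Rightarrow> ('v \<Rightarrow> 'v) \<Rightarrow> ('e \<Rightarrow> 'e) \<Rightarrow> bool" where
  "quiver_automorphism src tgt p q \<longleftrightarrow> bij p \<and> bij q \<and>
     (\<forall>\<alpha>. src (q \<alpha>) = p (src \<alpha>) \<and> tgt (q \<alpha>) = p (tgt \<alpha>))"

definition rep_pullback :: "('v \<Rightarrow> 'v) \<Rightarrow> ('e \<Rightarrow> 'e) \<Rightarrow> ('v, 'e) qrep \<Rightarrow> ('v, 'e) qrep" where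
  "rep_pullback p q M = (fst M \<circ> p, snd M \<circ> q)"

lemma quiver_automorphism_inv:
  assumes "quiver_automorphism src tgt p q"
  shows "quiver_automorphism src tgt (Hilbert_Choice.inv p) (Hilbert_Choice.inv q)"
proof -
  have "src (Hilbert_Choice.inv q \<alpha>) = Hilbert_Choice.inv p (src \<alpha>)"
    and "tgt (Hilbert_Choice.inv q \<alpha>) = Hilbert_Choice.inv p (tgt \<alpha>)" for \<alpha>
    using assms unfolding quiver_automorphism_def
    by (metis bij_inv_eq_iff)+
  with assms show ?thesis
    by (simp add: quiver_automorphism_def bij_imp_bij_inv)
qed

lemma rep_pullback_inv:
  assumes "bij p" "bij q"
  shows "rep_pullback (Hilbert_Choice.inv p) (Hilbert_Choice.inv q) (rep_pullback p q M) = M"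
proof -
  have "p \<circ> Hilbert_Choice.inv p = id" "q \<circ> Hilbert_Choice.inv q = id"
    using assms by (meson bij_is_surj surj_iff)+
  then show ?thesis by (simp add: rep_pullback_def flip: o_assoc)
qed

lemma euler_form_pullback:
  assumes "quiver_automorphism src tgt p q"
  shows "euler_form src tgt (a \<circ> p) (b \<circ> p) = euler_form src tgt a b"
proof -
  have "(\<Sum>i\<in>UNIV. a (p i) * b (p i)) = (\<Sum>i\<in>UNIV. a i * b i)"
    using assms by (intro sum.reindex_bij_betw) (simp add: quiver_automorphism_def)
  moreover have "(\<Sum>\<alpha>\<in>UNIV. a (src (q \<alpha>)) * b (tgt (q \<alpha>))) =
      (\<Sum>\<alpha>\<in>UNIV. a (src \<alpha>) * b (tgt \<alpha>))"
    using assms by (intro sum.reindex_bij_betw) (simp add: quiver_automorphism_def)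
  ultimately show ?thesis
    using assms by (simp add: euler_form_def quiver_automorphism_def)
qed

lemma grass_set_pullback:
  assumes "\<And>\<alpha>. src (q \<alpha>) = p (src \<alpha>)" "\<And>\<alpha>. tgt (q \<alpha>) = p (tgt \<alpha>)"
    and "P \<in> grass_set src tgt M e"
  shows "P \<circ> p \<in> grass_set src tgt (rep_pullback p q M) (e \<circ> p)"
  using assms(3) unfolding grass_set_def rep_pullback_def
  by (simp add: Let_def flip: assms(1,2))

lemma continuous_map_matrix_tuple_comp:
  "continuous_map matrix_tuple_topology matrix_tuple_topology (\<lambda>P. P \<circ> p)"
  unfolding matrix_tuple_topology_def comp_apply
    continuous_map_componentwise_UNIV[of _ _ "\<lambda>P. P \<circ> p"]
  by (intro allI continuous_map_product_projection UNIV_I)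

lemma quiver_grassmannian_pullback_homeomorphic:
  assumes "quiver_automorphism src tgt p q"
  shows "quiver_grassmannian src tgt (rep_pullback p q M) (e \<circ> p)
           homeomorphic_space quiver_grassmannian src tgt M e"
proof -
  let ?p' = "Hilbert_Choice.inv p" and ?q' = "Hilbert_Choice.inv q"
  have p: "bij p" "bij q" and p': "quiver_automorphism src tgt ?p' ?q'"
    using assms quiver_automorphism_inv by (auto simp: quiver_automorphism_def)
  have inv: "p \<circ> ?p' = id" "?p' \<circ> p = id"
    using p by (meson bij_is_inj bij_is_surj inj_iff surj_iff)+
  have "homeomorphic_maps matrix_tuple_topology matrix_tuple_topology (\<lambda>P. P \<circ> p) (\<lambda>P. P \<circ> ?p')"
    using inv by (simp add: homeomorphic_maps_def continuous_map_matrix_tuple_comp flip: o_assoc)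
  then have "homeomorphic_maps (quiver_grassmannian src tgt M e)
      (quiver_grassmannian src tgt (rep_pullback p q M) (e \<circ> p)) (\<lambda>P. P \<circ> p) (\<lambda>P. P \<circ> ?p')"
    unfolding quiver_grassmannian_def
  proof (rule homeomorphic_maps_subtopologies_alt)
    show "(\<lambda>P. P \<circ> p) ` (topspace matrix_tuple_topology \<inter> grass_set src tgt M e)
        \<subseteq> grass_set src tgt (rep_pullback p q M) (e \<circ> p)"
      using assms by (auto simp: quiver_automorphism_def intro!: grass_set_pullback)
    have "P \<circ> ?p' \<in> grass_set src tgt M e"
      if "P \<in> grass_set src tgt (rep_pullback p q M) (e \<circ> p)" for P
      using grass_set_pullback[OF _ _ that, of ?q' ?p'] p' p inv
      by (simp add: quiver_automorphism_def rep_pullback_inv flip: o_assoc)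
    then show "(\<lambda>P. P \<circ> ?p') `
        (topspace matrix_tuple_topology \<inter> grass_set src tgt (rep_pullback p q M) (e \<circ> p))
        \<subseteq> grass_set src tgt M e"
      by blast
  qed
  then show ?thesis
    unfolding homeomorphic_space_def by (blast intro: homeomorphic_maps_sym[THEN iffD1])
qed

definition cc_exponent ::
    "('e::finite \<Rightarrow> 'v::finite) \<Rightarrow> ('e \<Rightarrow> 'v) \<Rightarrow> ('v \<Rightarrow> nat) \<Rightarrow> ('v \<Rightarrow> nat) \<Rightarrow> 'v \<Rightarrow> int" where
  "cc_exponent src tgt d e = (\<lambda>i. - euler_form src tgt (int \<circ> e) (unitvec i)
     - euler_form src tgt (unitvec i) (\<lambda>j. int (d j) - int (e j)))"

lemma CC_module_cc_exponent:
  "CC_module src tgt M = (\<Sum>e\<in>{e. \<forall>i. e i \<le> fst M i}.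
     Poly_Mapping.single (cc_exponent src tgt (fst M) e)
       (euler_char (quiver_grassmannian src tgt M e)))"
  by (simp add: CC_module_def cc_exponent_def)

lemma cc_exponent_pullback:
  assumes "quiver_automorphism src tgt p q"
  shows "cc_exponent src tgt (d \<circ> p) (e \<circ> p) = cc_exponent src tgt d e \<circ> p"
proof
  fix i
  have "inj p" using assms by (simp add: quiver_automorphism_def bij_is_inj)
  then have "unitvec i = unitvec (p i) \<circ> p"
    by (auto simp: unitvec_def fun_eq_iff inj_eq)
  moreover have "int \<circ> (e \<circ> p) = (int \<circ> e) \<circ> p"
    and "(\<lambda>j. int ((d \<circ> p) j) - int ((e \<circ> p) j)) = (\<lambda>j. int (d j) - int (e j)) \<circ> p"
    by auto
  ultimately show "cc_exponent src tgt (d \<circ> p) (e \<circ> p) i = (cc_exponent src tgt d e \<circ> p) i"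
    unfolding cc_exponent_def by (simp only: euler_form_pullback[OF assms] comp_apply)
qed

lemma CC_module_pullback:
  assumes "quiver_automorphism src tgt p q"
  shows "CC_module src tgt (rep_pullback p q M) =
    lact (Hilbert_Choice.inv p) (CC_module src tgt M)"
proof -
  let ?p' = "Hilbert_Choice.inv p"
    and ?X = "\<lambda>M e. Poly_Mapping.single (cc_exponent src tgt (fst M) e)
                      (euler_char (quiver_grassmannian src tgt M e))"
  have p: "bij p" "bij ?p'" "Hilbert_Choice.inv ?p' = p"
    using assms by (auto simp: quiver_automorphism_def bij_imp_bij_inv inv_inv_eq)
  have reindex: "bij_betw (\<lambda>e. e \<circ> p) {e. \<forall>i. e i \<le> d i} {e. \<forall>i. e i \<le> d (p i)}"
    for d :: "_ \<Rightarrow> nat"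
    using p(1) by (intro bij_betw_byWitness[where f' = "\<lambda>e. e \<circ> ?p'"])
      (auto simp: fun_eq_iff bij_is_inj bij_is_surj surj_f_inv_f, metis bij_is_surj surj_f_inv_f)
  have "lact ?p' (CC_module src tgt M) = (\<Sum>e\<in>{e. \<forall>i. e i \<le> fst M i}.
      Poly_Mapping.single (cc_exponent src tgt (fst M) e \<circ> p)
        (euler_char (quiver_grassmannian src tgt M e)))"
    by (simp add: CC_module_cc_exponent lact_sum lact_single p)
  also have "\<dots> = (\<Sum>e\<in>{e. \<forall>i. e i \<le> fst M i}. ?X (rep_pullback p q M) (e \<circ> p))"
    using cc_exponent_pullback[OF assms]
      euler_char_homeomorphic[OF quiver_grassmannian_pullback_homeomorphic[OF assms]]
    by (simp add: rep_pullback_def)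
  also have "\<dots> = (\<Sum>e\<in>{e. \<forall>i. e i \<le> fst M (p i)}. ?X (rep_pullback p q M) e)"
    by (rule sum.reindex_bij_betw[OF reindex])
  also have "\<dots> = CC_module src tgt (rep_pullback p q M)"
    by (simp add: CC_module_cc_exponent rep_pullback_def)
  finally show ?thesis ..
qed

lemma CC_pullback:
  assumes "quiver_automorphism src tgt p q"
  shows "CC src tgt (rep_pullback p q M, m \<circ> p) =
    lact (Hilbert_Choice.inv p) (CC src tgt (M, m))"
proof -
  have p: "bij (Hilbert_Choice.inv p)" "Hilbert_Choice.inv (Hilbert_Choice.inv p) = p"
    using assms by (auto simp: quiver_automorphism_def bij_imp_bij_inv inv_inv_eq)
  then show ?thesis
    by (simp add: CC_def CC_module_pullback[OF assms] lact_mult lmonom_def lact_single o_assoc)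
qed

lemma quiver_group_action_automorphism:
  assumes "quiver_group_action G vact aact src tgt" "g \<in> carrier G"
  shows "quiver_automorphism src tgt (vact g) (aact g)"
  using assms by (simp add: quiver_group_action_def quiver_automorphism_def)

lemma quiver_group_action_inv:
  assumes "quiver_group_action G vact aact src tgt" "g \<in> carrier G"
  shows "Hilbert_Choice.inv (vact (inv\<^bsub>G\<^esub> g)) = vact g"
proof -
  have "group G" using assms(1) by (simp add: quiver_group_action_def)
  then have "vact (inv\<^bsub>G\<^esub> g) \<circ> vact g = id" "vact g \<circ> vact (inv\<^bsub>G\<^esub> g) = id"
    using assms group.inv_closed group.r_inv group.l_inv unfolding quiver_group_action_def
    by metis+
  then show ?thesis by (rule inv_unique_comp)
qed

theorem mainTheorem15:
  fixes G :: "('g, 'b) monoid_scheme"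
    and vact :: "'g \<Rightarrow> 'v::finite \<Rightarrow> 'v" and aact :: "'g \<Rightarrow> 'e::finite \<Rightarrow> 'e"
    and src tgt :: "'e \<Rightarrow> 'v"
    and M :: "('v, 'e) cc_obj" and g :: 'g
  assumes "acyclic_quiver src tgt"
    and "admissible_action G vact aact src tgt"
    and "g \<in> carrier G"
  shows "CC src tgt (obj_act G vact aact g M) = lact (vact g) (CC src tgt M)"
proof -
  have act: "quiver_group_action G vact aact src tgt"
    using assms(2) by (simp add: admissible_action_def)
  let ?h = "inv\<^bsub>G\<^esub> g"
  have "?h \<in> carrier G"
    using act assms(3) by (simp add: quiver_group_action_def group.inv_closed)
  have "obj_act G vact aact g M = (rep_pullback (vact ?h) (aact ?h) (fst M), snd M \<circ> vact ?h)"
    by (simp add: obj_act_def rep_act_def rep_pullback_def)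
  moreover note CC_pullback[OF quiver_group_action_automorphism[OF act \<open>?h \<in> carrier G\<close>],
      of "fst M" "snd M"]
  ultimately show ?thesis
    by (simp add: quiver_group_action_inv[OF act assms(3)])
qed

end
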